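(* Let $(M,\phi,\xi,\eta,g)$ be a (connected) almost contact metric manifold with a $\phi$-invariant distribution $\mathcal{V}$, and let $\mathcal{H}=\mathcal{V}^\perp$. Then $\xi\in\Gamma(\mathcal{V})$ or $\xi\in\Gamma(\mathcal{H})$. Moreover, if $\xi\in\Gamma(\mathcal{V})$, then $\mathcal{H}\subseteq\mathcal{D}=\ker\eta$.
   Context: Almost contact metric structure: $(\phi,\xi,\eta,g)$ with $\phi$ a $(1,1)$-tensor, $\xi$ a vector field, $\eta$ a 1-form, $g$ Riemannian, $\phi^2=-I+\eta\otimes\xi$, $\eta(\xi)=1$, $g(\phi X,\phi Y)=g(X,Y)-\eta(X)\eta(Y)$. A distribution $\mathcal{V}$ is $\phi$-invariant if $\phi(\mathcal{V})\subseteq\mathcal{V}$. *)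

theory Defs
  imports "HOL-Analysis.Analysis"
begin

text \<open>Model of a manifold with its tangent bundle: M is a (connected) topological space
  (a subset of 'm with the subspace topology), and the tangent space at p is a linear
  subspace T p of a fixed finite-dimensional real vector space 'v (e.g. via an embedding
  into Euclidean space).  Tensor fields are given fibrewise; their regularity is
  expressed by continuity along continuous local vector fields.\<close>

definition cont_distribution ::
  "'m::topological_space set \<Rightarrow> ('m \<Rightarrow> 'v::euclidean_space set) \<Rightarrow> ('m \<Rightarrow> 'v set) \<Rightarrow> nat \<Rightarrow> bool" where
  "cont_distribution M T D k \<longleftrightarrow>
     (\<forall>p\<in>M. subspace (D p) \<and> D p \<subseteq> T p \<and> dim (D p) = k) \<and>
     (\<forall>p\<in>M. \<exists>U X. open U \<and> p \<in> U \<and>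
        (\<forall>i<k. continuous_on (U \<inter> M) (X i)) \<and>
        (\<forall>q\<in>U \<inter> M. D q = span ((\<lambda>i. X i q) ` {..<k})))"

definition cont_field ::
  "'m::topological_space set \<Rightarrow> ('m \<Rightarrow> 'v::euclidean_space set) \<Rightarrow> 'm set \<Rightarrow> ('m \<Rightarrow> 'v) \<Rightarrow> bool" where
  "cont_field M T U X \<longleftrightarrow> continuous_on (U \<inter> M) X \<and> (\<forall>q\<in>U \<inter> M. X q \<in> T q)"

definition acms_at ::
  "('v::euclidean_space set) \<Rightarrow> ('v \<Rightarrow> 'v) \<Rightarrow> 'v \<Rightarrow> ('v \<Rightarrow> real) \<Rightarrow> ('v \<Rightarrow> 'v \<Rightarrow> real) \<Rightarrow> bool" where
  "acms_at Tp ph xi eta g \<longleftrightarrow>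
     subspace Tp \<and> xi \<in> Tp \<and>
     (\<forall>X\<in>Tp. ph X \<in> Tp) \<and>
     (\<forall>X\<in>Tp. \<forall>Y\<in>Tp. \<forall>a b::real. ph (a *\<^sub>R X + b *\<^sub>R Y) = a *\<^sub>R ph X + b *\<^sub>R ph Y) \<and>
     (\<forall>X\<in>Tp. \<forall>Y\<in>Tp. \<forall>a b::real. eta (a *\<^sub>R X + b *\<^sub>R Y) = a * eta X + b * eta Y) \<and>
     (\<forall>X\<in>Tp. \<forall>Y\<in>Tp. \<forall>Z\<in>Tp. \<forall>a b::real. g (a *\<^sub>R X + b *\<^sub>R Y) Z = a * g X Z + b * g Y Z) \<and>
     (\<forall>X\<in>Tp. \<forall>Y\<in>Tp. g X Y = g Y X) \<and>
     (\<forall>X\<in>Tp. X \<noteq> 0 \<longrightarrow> g X X > 0) \<and>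
     (\<forall>X\<in>Tp. ph (ph X) = - X + eta X *\<^sub>R xi) \<and>
     eta xi = 1 \<and>
     (\<forall>X\<in>Tp. \<forall>Y\<in>Tp. g (ph X) (ph Y) = g X Y - eta X * eta Y)"

definition almost_contact_metric_manifold ::
  "'m::topological_space set \<Rightarrow> ('m \<Rightarrow> 'v::euclidean_space set) \<Rightarrow> ('m \<Rightarrow> 'v \<Rightarrow> 'v) \<Rightarrow> ('m \<Rightarrow> 'v)
    \<Rightarrow> ('m \<Rightarrow> 'v \<Rightarrow> real) \<Rightarrow> ('m \<Rightarrow> 'v \<Rightarrow> 'v \<Rightarrow> real) \<Rightarrow> bool" where
  "almost_contact_metric_manifold M T ph xi eta g \<longleftrightarrow>
     (\<exists>n. cont_distribution M T T n) \<and>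
     (\<forall>p\<in>M. acms_at (T p) (ph p) (xi p) (eta p) (g p)) \<and>
     cont_field M T UNIV xi \<and>
     (\<forall>U X Y. open U \<longrightarrow> cont_field M T U X \<longrightarrow> cont_field M T U Y \<longrightarrow>
        continuous_on (U \<inter> M) (\<lambda>q. ph q (X q)) \<and>
        continuous_on (U \<inter> M) (\<lambda>q. eta q (X q)) \<and>
        continuous_on (U \<inter> M) (\<lambda>q. g q (X q) (Y q)))"

definition phi_invariant :: "'m set \<Rightarrow> ('m \<Rightarrow> 'v \<Rightarrow> 'v) \<Rightarrow> ('m \<Rightarrow> 'v set) \<Rightarrow> bool" where
  "phi_invariant M ph V \<longleftrightarrow> (\<forall>p\<in>M. \<forall>X\<in>V p. ph p X \<in> V p)"

definition orth_distribution ::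
  "('m \<Rightarrow> 'v set) \<Rightarrow> ('m \<Rightarrow> 'v \<Rightarrow> 'v \<Rightarrow> real) \<Rightarrow> ('m \<Rightarrow> 'v set) \<Rightarrow> 'm \<Rightarrow> 'v set" where
  "orth_distribution T g V p = {X \<in> T p. \<forall>Y\<in>V p. g p X Y = 0}"

definition section_of :: "'m set \<Rightarrow> ('m \<Rightarrow> 'v) \<Rightarrow> ('m \<Rightarrow> 'v set) \<Rightarrow> bool" where
  "section_of M X D \<longleftrightarrow> (\<forall>p\<in>M. X p \<in> D p)"

end

theory Submission
  imports Defs
begin

(* On ker eta the endomorphism phi satisfies phi^2 = -1, so every phi-invariant subspace of
   ker eta has even dimension.  A phi-invariant subspace V of a tangent space either contains
   xi, and then V = span {xi} + (V \<inter> ker eta) has odd dimension, or it does not, and then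
   phi^2 X + X = eta X xi \<in> V forces V \<subseteq> ker eta = xi^perp, so V has even dimension and is
   orthogonal to xi.  Since V has constant rank, the same alternative holds at every point.  Finally eta = g(-, xi), so eta vanishes on V^perp
   whenever xi \<in> V. *)

definition complex_structure_on :: "'v::real_vector set \<Rightarrow> ('v \<Rightarrow> 'v) \<Rightarrow> bool" where
  "complex_structure_on W J \<longleftrightarrow>
     subspace W \<and>
     (\<forall>x\<in>W. J x \<in> W) \<and>
     (\<forall>x\<in>W. \<forall>y\<in>W. J (x + y) = J x + J y) \<and>
     (\<forall>x\<in>W. \<forall>c. J (c *\<^sub>R x) = c *\<^sub>R J x) \<and>
     (\<forall>x\<in>W. J (J x) = - x)"

lemma complex_structure_onD:
  assumes "complex_structure_on W J"
  shows complex_structure_on_subspaceD: "subspace W"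
    and complex_structure_on_closed: "x \<in> W \<Longrightarrow> J x \<in> W"
    and complex_structure_on_add: "x \<in> W \<Longrightarrow> y \<in> W \<Longrightarrow> J (x + y) = J x + J y"
    and complex_structure_on_scale: "x \<in> W \<Longrightarrow> J (c *\<^sub>R x) = c *\<^sub>R J x"
    and complex_structure_on_involution: "x \<in> W \<Longrightarrow> J (J x) = - x"
  using assms unfolding complex_structure_on_def by blast+

lemma complex_structure_on_zero:
  assumes "complex_structure_on W J"
  shows "J 0 = 0"
  using complex_structure_on_scale[OF assms, of 0 0]
    subspace_0[OF complex_structure_on_subspaceD[OF assms]]
  by simp

lemma complex_structure_on_invariant_subspace:
  assumes "complex_structure_on W J" and "subspace S" and "S \<subseteq> W" and "\<forall>x\<in>S. J x \<in> S"
  shows "complex_structure_on S J"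
  using assms unfolding complex_structure_on_def by blast

lemma complex_structure_on_span:
  assumes J: "complex_structure_on W J" and B: "B \<subseteq> W" and JB: "\<forall>b\<in>B. J b \<in> span B"
  shows "complex_structure_on (span B) J"
proof -
  have span_W: "span B \<subseteq> W"
    using B complex_structure_on_subspaceD[OF J] by (rule span_minimal)
  let ?P = "{x \<in> span B. J x \<in> span B}"
  have "subspace ?P"
    unfolding subspace_def
  proof (intro conjI ballI allI)
    show "0 \<in> ?P" using complex_structure_on_zero[OF J] by (simp add: span_zero)
  next
    fix x y assume "x \<in> ?P" "y \<in> ?P"
    moreover have "J (x + y) = J x + J y"
      using calculation span_W by (intro complex_structure_on_add[OF J]) auto
    ultimately show "x + y \<in> ?P" by (simp add: span_add)
  next
    fix c x assume "x \<in> ?P"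
    moreover have "J (c *\<^sub>R x) = c *\<^sub>R J x"
      using calculation span_W by (intro complex_structure_on_scale[OF J]) auto
    ultimately show "c *\<^sub>R x \<in> ?P" by (simp add: span_scale)
  qed
  have "J x \<in> span B" if x: "x \<in> span B" for x
  proof -
    have "x \<in> ?P"
      using x \<open>subspace ?P\<close> by (rule span_subspace_induct) (simp add: JB span_base)
    then show ?thesis by simp
  qed
  then show ?thesis
    using complex_structure_on_invariant_subspace[OF J subspace_span span_W] by blast
qed

lemma complex_structure_image_notin_span_insert:
  assumes J: "complex_structure_on W J" and S: "complex_structure_on S J" "S \<subseteq> W"
    and w: "w \<in> W" "w \<notin> S"
  shows "J w \<notin> span (insert w S)"
proof
  note subspace_S = complex_structure_on_subspaceD[OF S(1)]
  assume "J w \<in> span (insert w S)"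
  then obtain c where "J w - c *\<^sub>R w \<in> S"
    using span_eq_iff[THEN iffD2, OF subspace_S] by (auto simp: span_insert)
  define s where "s = J w - c *\<^sub>R w"
  have s: "s \<in> S" "s \<in> W" using \<open>J w - c *\<^sub>R w \<in> S\<close> S(2) by (auto simp: s_def)
  have Jw: "J w = s + c *\<^sub>R w" by (simp add: s_def)
  have cw: "c *\<^sub>R w \<in> W" using subspace_scale[OF complex_structure_on_subspaceD[OF J] w(1)] .
  have "- w = J (s + c *\<^sub>R w)"
    using complex_structure_on_involution[OF J w(1)] Jw by simp
  also have "\<dots> = J s + c *\<^sub>R J w"
    using complex_structure_on_add[OF J s(2) cw] complex_structure_on_scale[OF J w(1)] by simp
  also have "\<dots> = J s + c *\<^sub>R (s + c *\<^sub>R w)"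
    by (simp only: Jw)
  finally have "(1 + c * c) *\<^sub>R w = - (J s + c *\<^sub>R s)"
    by (simp add: minus_equation_iff[of w] algebra_simps)
  also have "\<dots> \<in> S"
    using subspace_S s(1) complex_structure_on_closed[OF S(1) s(1)]
    by (metis subspace_add subspace_neg subspace_scale)
  finally have "inverse (1 + c * c) *\<^sub>R (1 + c * c) *\<^sub>R w \<in> S"
    using subspace_S subspace_scale by blast
  moreover have "1 + c * c \<noteq> 0"
    using zero_le_square[of c] by linarith
  ultimately show False using w(2) by simp
qed

lemma even_codim_complex_structure:
  fixes W :: "'v::euclidean_space set"
  assumes J: "complex_structure_on W J" and S: "complex_structure_on S J" "S \<subseteq> W"
  shows "even (dim W - dim S)"
  using S
proof (induction "dim W - dim S" arbitrary: S rule: less_induct)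
  case less
  show ?case
  proof (cases "W \<subseteq> S")
    case True
    then show ?thesis using less.prems(2) by simp
  next
    case False
    then obtain w where w: "w \<in> W" "w \<notin> S" by auto
    have Jw: "J w \<in> W" using complex_structure_on_closed[OF J w(1)] .
    define S' where "S' = span (insert (J w) (insert w S))"
    have "w \<notin> span S"
      using w(2) complex_structure_on_subspaceD[OF less.prems(1)] by (metis span_eq_iff)
    then have dim_S': "dim S' = dim S + 2"
      using complex_structure_image_notin_span_insert[OF J less.prems w]
      by (simp add: S'_def dim_insert del: span_eq_iff)
    have generators_W: "insert (J w) (insert w S) \<subseteq> W"
      using Jw w(1) less.prems(2) by auto
    then have S'_W: "S' \<subseteq> W"
      unfolding S'_def using complex_structure_on_subspaceD[OF J] by (rule span_minimal)
    have "complex_structure_on S' J"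
      unfolding S'_def
    proof (rule complex_structure_on_span[OF J generators_W], intro ballI)
      fix b assume "b \<in> insert (J w) (insert w S)"
      then consider "b = J w" | "b = w" | "b \<in> S" by blast
      then show "J b \<in> span (insert (J w) (insert w S))"
      proof cases
        case 1
        then show ?thesis
          using complex_structure_on_involution[OF J w(1)] by (simp add: span_base span_neg)
      next
        case 2
        then show ?thesis by (simp add: span_base)
      next
        case 3
        then show ?thesis
          using complex_structure_on_closed[OF less.prems(1)] by (simp add: span_base)
      qed
    qed
    moreover have "dim S' \<le> dim W" using S'_W by (rule dim_subset)
    ultimately have "even (dim W - dim S')"
      using less.hyps[of S'] dim_S' S'_W by simp
    then show ?thesis using dim_S' \<open>dim S' \<le> dim W\<close> by simp
  qed
qed

lemma even_dim_complex_structure: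
  fixes W :: "'v::euclidean_space set"
  assumes J: "complex_structure_on W J"
  shows "even (dim W)"
proof -
  have "complex_structure_on {0} J"
    using complex_structure_on_zero[OF J] by (simp add: complex_structure_on_def subspace_0)
  moreover have "{0} \<subseteq> W" using subspace_0[OF complex_structure_on_subspaceD[OF J]] by simp
  ultimately have "even (dim W - dim {0::'v})"
    by (rule even_codim_complex_structure[OF J])
  then show ?thesis by simp
qed

locale almost_contact_metric_vector_space =
  fixes Tp :: "'v::euclidean_space set" and ph :: "'v \<Rightarrow> 'v" and xi :: 'v
    and eta :: "'v \<Rightarrow> real" and g :: "'v \<Rightarrow> 'v \<Rightarrow> real"
  assumes acms: "acms_at Tp ph xi eta g"
begin

lemma subspace_Tp: "subspace Tp"
  and xi_in_Tp: "xi \<in> Tp"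
  and phi_in_Tp: "X \<in> Tp \<Longrightarrow> ph X \<in> Tp"
  and phi_phi: "X \<in> Tp \<Longrightarrow> ph (ph X) = - X + eta X *\<^sub>R xi"
  and eta_xi: "eta xi = 1"
  and g_sym: "X \<in> Tp \<Longrightarrow> Y \<in> Tp \<Longrightarrow> g X Y = g Y X"
  and metric_phi: "X \<in> Tp \<Longrightarrow> Y \<in> Tp \<Longrightarrow> g (ph X) (ph Y) = g X Y - eta X * eta Y"
  using acms unfolding acms_at_def by blast+

lemma phi_lincomb:
    "X \<in> Tp \<Longrightarrow> Y \<in> Tp \<Longrightarrow> ph (a *\<^sub>R X + b *\<^sub>R Y) = a *\<^sub>R ph X + b *\<^sub>R ph Y"
  and eta_lincomb:
    "X \<in> Tp \<Longrightarrow> Y \<in> Tp \<Longrightarrow> eta (a *\<^sub>R X + b *\<^sub>R Y) = a * eta X + b * eta Y"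
  and g_lincomb_left:
    "X \<in> Tp \<Longrightarrow> Y \<in> Tp \<Longrightarrow> Z \<in> Tp \<Longrightarrow> g (a *\<^sub>R X + b *\<^sub>R Y) Z = a * g X Z + b * g Y Z"
  using acms unfolding acms_at_def by blast+

lemma phi_add: "X \<in> Tp \<Longrightarrow> Y \<in> Tp \<Longrightarrow> ph (X + Y) = ph X + ph Y"
  using phi_lincomb[of X Y 1 1] by simp

lemma phi_scale: "X \<in> Tp \<Longrightarrow> ph (c *\<^sub>R X) = c *\<^sub>R ph X"
  using phi_lincomb[of X X c 0] by simp

lemma eta_add: "X \<in> Tp \<Longrightarrow> Y \<in> Tp \<Longrightarrow> eta (X + Y) = eta X + eta Y"
  using eta_lincomb[of X Y 1 1] by simp

lemma eta_scale: "X \<in> Tp \<Longrightarrow> eta (c *\<^sub>R X) = c * eta X"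
  using eta_lincomb[of X X c 0] by simp

lemma g_zero_left: "Z \<in> Tp \<Longrightarrow> g 0 Z = 0"
  using g_lincomb_left[of Z Z Z 0 0] by simp

lemma xi_neq_0: "xi \<noteq> 0"
  using eta_scale[OF xi_in_Tp, of 0] eta_xi by auto

lemma phi_xi: "ph xi = 0"
proof -
  have ph0: "ph 0 = 0" using phi_scale[OF xi_in_Tp, of 0] by simp
  have phi_phi_xi: "ph (ph xi) = 0"
    using phi_phi[OF xi_in_Tp] eta_xi by simp
  have "- ph xi + eta (ph xi) *\<^sub>R xi = ph (ph (ph xi))"
    using phi_phi[OF phi_in_Tp[OF xi_in_Tp]] by simp
  also have "\<dots> = 0" using phi_phi_xi ph0 by simp
  finally have ph_xi: "ph xi = eta (ph xi) *\<^sub>R xi" by (simp add: algebra_simps)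
  then have "0 = eta (ph xi) *\<^sub>R ph xi"
    using phi_phi_xi phi_scale[OF xi_in_Tp] by metis
  also have "\<dots> = (eta (ph xi) * eta (ph xi)) *\<^sub>R xi"
    by (subst ph_xi) simp
  finally show ?thesis using ph_xi xi_neq_0 by simp
qed

lemma eta_phi: "X \<in> Tp \<Longrightarrow> eta (ph X) = 0"
proof -
  assume X: "X \<in> Tp"
  have "- ph X + eta (ph X) *\<^sub>R xi = ph (ph (ph X))"
    using phi_phi[OF phi_in_Tp[OF X]] by simp
  also have "\<dots> = ph (- X + eta X *\<^sub>R xi)"
    by (simp only: phi_phi[OF X])
  also have "\<dots> = ph (- X) + ph (eta X *\<^sub>R xi)"
    using X xi_in_Tp subspace_Tp by (intro phi_add) (auto simp: subspace_neg subspace_scale)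
  also have "\<dots> = - ph X"
    using phi_scale[OF X, of "-1"] phi_scale[OF xi_in_Tp] phi_xi by simp
  finally show ?thesis using xi_neq_0 by simp
qed

lemma eta_eq_g_xi:
  assumes X: "X \<in> Tp"
  shows "eta X = g X xi"
proof -
  have "g X xi - eta X = g (ph X) (ph xi)"
    using metric_phi[OF X xi_in_Tp] eta_xi by simp
  also have "\<dots> = g 0 (ph X)"
    using g_sym[OF phi_in_Tp[OF X], of 0] subspace_Tp phi_xi by (simp add: subspace_0)
  also have "\<dots> = 0"
    using g_zero_left[OF phi_in_Tp[OF X]] .
  finally show ?thesis by simp
qed

lemma complex_structure_on_kernel_eta: "complex_structure_on {X \<in> Tp. eta X = 0} ph"
  unfolding complex_structure_on_def
proof (intro conjI ballI allI)
  show "subspace {X \<in> Tp. eta X = 0}"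
    unfolding subspace_def
    using subspace_Tp eta_add eta_scale eta_scale[OF xi_in_Tp, of 0]
    by (simp add: subspace_0 subspace_add subspace_scale)
qed (simp_all add: phi_in_Tp eta_phi phi_add phi_scale phi_phi)

lemma eta_vanishes_on_invariant_subspace:
  assumes V: "subspace V" "V \<subseteq> Tp" and inv: "\<forall>X\<in>V. ph X \<in> V"
    and xi: "xi \<notin> V" and X: "X \<in> V"
  shows "eta X = 0"
proof (rule ccontr)
  assume nz: "eta X \<noteq> 0"
  have "ph (ph X) + X \<in> V" using inv X V(1) by (simp add: subspace_add)
  then have "eta X *\<^sub>R xi \<in> V" using phi_phi X V(2) by auto
  then have "inverse (eta X) *\<^sub>R eta X *\<^sub>R xi \<in> V" using V(1) subspace_scale by blast
  then show False using nz xi by simp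
qed

lemma odd_dim_invariant_subspace_iff:
  assumes V: "subspace V" "V \<subseteq> Tp" and inv: "\<forall>X\<in>V. ph X \<in> V"
  shows "odd (dim V) \<longleftrightarrow> xi \<in> V"
proof -
  define W where "W = V \<inter> {X \<in> Tp. eta X = 0}"
  have W: "subspace W"
    using V(1) complex_structure_on_kernel_eta
    unfolding W_def complex_structure_on_def by (blast intro: subspace_inter)
  have "complex_structure_on W ph"
  proof (rule complex_structure_on_invariant_subspace[OF complex_structure_on_kernel_eta W])
    show "\<forall>X\<in>W. ph X \<in> W" using inv V(2) eta_phi unfolding W_def by auto
  qed (auto simp: W_def)
  then have W_even: "even (dim W)" by (rule even_dim_complex_structure)
  show ?thesis
  proof
    assume xi_V: "xi \<in> V"
    have "V = span (insert xi W)"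
    proof
      show "V \<subseteq> span (insert xi W)"
      proof
        fix X assume X: "X \<in> V"
        have "eta (X - eta X *\<^sub>R xi) = 0"
          using eta_lincomb[of X xi 1 "- eta X"] X V(2) xi_in_Tp eta_xi by auto
        moreover have "X - eta X *\<^sub>R xi \<in> V"
          using X xi_V V(1) by (simp add: subspace_diff subspace_scale)
        ultimately have "X - eta X *\<^sub>R xi \<in> span W"
          using V(2) by (auto simp: W_def intro: span_base)
        then show "X \<in> span (insert xi W)" by (auto simp: span_insert)
      qed
      show "span (insert xi W) \<subseteq> V" using V xi_V by (intro span_minimal) (auto simp: W_def)
    qed
    moreover have "xi \<notin> W" using eta_xi by (simp add: W_def)
    then have "xi \<notin> span W" using W by (metis span_eq_iff)
    ultimately have "dim V = dim W + 1" by (metis dim_insert dim_span)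
    then show "odd (dim V)" using W_even by simp
  next
    assume odd: "odd (dim V)"
    show "xi \<in> V"
    proof (rule ccontr)
      assume "xi \<notin> V"
      then have "W = V"
        using eta_vanishes_on_invariant_subspace[OF V inv] V(2) unfolding W_def by auto
      then show False using W_even odd by simp
    qed
  qed
qed

lemma xi_orthogonal_to_invariant_subspace:
  assumes V: "subspace V" "V \<subseteq> Tp" and inv: "\<forall>X\<in>V. ph X \<in> V"
    and xi: "xi \<notin> V" and Y: "Y \<in> V"
  shows "g xi Y = 0"
  using eta_vanishes_on_invariant_subspace[OF assms] eta_eq_g_xi g_sym xi_in_Tp Y V(2) by auto

end

theorem lemma2p1:
  fixes M :: "'m::topological_space set"
    and T :: "'m \<Rightarrow> 'v::euclidean_space set"
    and ph :: "'m \<Rightarrow> 'v \<Rightarrow> 'v" and xi :: "'m \<Rightarrow> 'v" and eta :: "'m \<Rightarrow> 'v \<Rightarrow> real"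
    and g :: "'m \<Rightarrow> 'v \<Rightarrow> 'v \<Rightarrow> real" and V :: "'m \<Rightarrow> 'v set" and k :: nat
  assumes "connected M"
    and "almost_contact_metric_manifold M T ph xi eta g"
    and "cont_distribution M T V k"
    and "phi_invariant M ph V"
  shows "(section_of M xi V \<or> section_of M xi (orth_distribution T g V)) \<and>
         (section_of M xi V \<longrightarrow>
            (\<forall>p\<in>M. orth_distribution T g V p \<subseteq> {X \<in> T p. eta p X = 0}))"
proof -
  have acm: "almost_contact_metric_vector_space (T p) (ph p) (xi p) (eta p) (g p)"
    if "p \<in> M" for p
    using assms(2) that
    unfolding almost_contact_metric_manifold_def almost_contact_metric_vector_space_def by blast
  have V: "subspace (V p)" "V p \<subseteq> T p" "dim (V p) = k" if "p \<in> M" for p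
    using assms(3) that unfolding cont_distribution_def by blast+
  have inv: "\<forall>X\<in>V p. ph p X \<in> V p" if "p \<in> M" for p
    using assms(4) that unfolding phi_invariant_def by blast
  have xi_in_V_iff: "xi p \<in> V p \<longleftrightarrow> odd k" if p: "p \<in> M" for p
    using almost_contact_metric_vector_space.odd_dim_invariant_subspace_iff
        [OF acm[OF p] V(1,2)[OF p] inv[OF p]]
      V(3)[OF p]
    by simp
  have "section_of M xi V \<or> section_of M xi (orth_distribution T g V)"
    using xi_in_V_iff
      almost_contact_metric_vector_space.xi_orthogonal_to_invariant_subspace[OF acm V(1,2) inv]
      almost_contact_metric_vector_space.xi_in_Tp[OF acm]
    unfolding section_of_def orth_distribution_def by (cases "odd k") auto
  moreover have "orth_distribution T g V p \<subseteq> {X \<in> T p. eta p X = 0}"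
    if "section_of M xi V" and p: "p \<in> M" for p
    using that almost_contact_metric_vector_space.eta_eq_g_xi[OF acm[OF p]]
    unfolding section_of_def orth_distribution_def by auto
  ultimately show ?thesis by blast
qed

end
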